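(* Let $2\leq l\leq t$ be integers, let $s\geq 2$, and let $m_1,\ldots,m_s\geq 1$ be integers. Then $$\sum_{i=1}^s ex(m_i,K_{l,t})\leq ex\left(\sum_{i=1}^s m_i-s+1,\,K_{l,t}\right).$$
   Context: $ex(m,K_{l,t})$ is the maximum number of edges of a simple graph on $m$ vertices containing no copy of the complete bipartite graph $K_{l,t}$ (parts of sizes $l$ and $t$) as a subgraph. *)

theory Defs
  imports Main
begin

definition simple_graph :: "'a set \<Rightarrow> 'a set set \<Rightarrow> bool" where
  "simple_graph V E \<longleftrightarrow> (\<forall>e\<in>E. e \<subseteq> V \<and> card e = 2)"

definition contains_Klt :: "nat \<Rightarrow> nat \<Rightarrow> 'a set \<Rightarrow> 'a set set \<Rightarrow> bool" where
  "contains_Klt l t V E \<longleftrightarrow>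
     (\<exists>A B. A \<subseteq> V \<and> B \<subseteq> V \<and> A \<inter> B = {} \<and> card A = l \<and> card B = t \<and>
            finite A \<and> finite B \<and> (\<forall>a\<in>A. \<forall>b\<in>B. {a, b} \<in> E))"

definition ex_Klt :: "nat \<Rightarrow> nat \<Rightarrow> nat \<Rightarrow> nat" where
  "ex_Klt m l t = Max {card E | E. simple_graph {0..<m} E \<and> \<not> contains_Klt l t {0..<m} E}"

end

theory Submission
  imports Defs
begin

text \<open>For \<open>l, t \<ge> 2\<close> the graph \<open>K\<^sub>l\<^sub>,\<^sub>t\<close> has no cut vertex. Hence two \<open>K\<^sub>l\<^sub>,\<^sub>t\<close>-free
  graphs on \<open>a\<close> and \<open>b\<close> vertices, glued at a single vertex, form a \<open>K\<^sub>l\<^sub>,\<^sub>t\<close>-free graph on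
  \<open>a + b - 1\<close> vertices whose edge count is the sum of the two. This gives
  \<open>ex(a) + ex(b) \<le> ex(a + b - 1)\<close>, and induction on \<open>s\<close> gives the general inequality.\<close>

lemma finite_simple_graphs:
  assumes "finite V"
  shows "finite {E. simple_graph V E}"
proof (rule finite_subset)
  show "{E. simple_graph V E} \<subseteq> Pow (Pow V)"
    unfolding simple_graph_def by auto
qed (use assms in simp)

lemma simple_graph_finite_edges:
  assumes "simple_graph V E" "finite V"
  shows "finite E"
proof -
  have "E \<subseteq> Pow V"
    using assms(1) unfolding simple_graph_def by blast
  then show ?thesis
    using assms(2) by (simp add: finite_subset)
qed

lemma simple_graph_image:
  assumes "simple_graph V E" "inj_on h V"
  shows "simple_graph (h ` V) ((`) h ` E)"
  using assms unfolding simple_graph_def by (auto simp: card_image inj_on_subset)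

lemma simple_graph_Un:
  assumes "simple_graph V1 E1" "simple_graph V2 E2"
  shows "simple_graph (V1 \<union> V2) (E1 \<union> E2)"
  using assms unfolding simple_graph_def by blast

lemma contains_Klt_image:
  assumes "contains_Klt l t V E" "inj_on h V"
  shows "contains_Klt l t (h ` V) ((`) h ` E)"
proof -
  from assms(1) obtain A B where AB: "A \<subseteq> V" "B \<subseteq> V" "A \<inter> B = {}" "card A = l" "card B = t"
    "finite A" "finite B" and edges: "\<forall>a\<in>A. \<forall>b\<in>B. {a, b} \<in> E"
    unfolding contains_Klt_def by blast
  have "h ` A \<inter> h ` B = {}"
    using AB(1-3) assms(2) unfolding inj_on_def by blast
  moreover have "{h a, h b} \<in> (`) h ` E" if "a \<in> A" "b \<in> B" for a b
  proof -
    have "h ` {a, b} \<in> (`) h ` E"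
      using edges that by blast
    then show ?thesis
      by simp
  qed
  then have "\<forall>x\<in>h ` A. \<forall>y\<in>h ` B. {x, y} \<in> (`) h ` E"
    by blast
  moreover have "card (h ` A) = l" "card (h ` B) = t"
    using AB(1,2,4,5) assms(2) by (simp_all add: card_image inj_on_subset)
  ultimately show ?thesis
    unfolding contains_Klt_def using AB(1,2,6,7)
    by (intro exI[of _ "h ` A"] exI[of _ "h ` B"]) (simp add: image_mono)
qed

lemma contains_Klt_image_iff:
  assumes "inj_on h V" "\<forall>e\<in>E. e \<subseteq> V"
  shows "contains_Klt l t (h ` V) ((`) h ` E) \<longleftrightarrow> contains_Klt l t V E"
proof
  let ?h' = "inv_into V h"
  assume "contains_Klt l t (h ` V) ((`) h ` E)"
  then have "contains_Klt l t (?h' ` h ` V) ((`) ?h' ` (`) h ` E)"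
    by (rule contains_Klt_image) (use assms(1) inj_on_inv_into in blast)
  moreover have "(`) ?h' ` (`) h ` E = E"
  proof -
    have "?h' ` h ` e = e" if "e \<in> E" for e
      using assms that by (simp add: inv_into_image_cancel)
    then show ?thesis
      by (simp add: image_image)
  qed
  ultimately show "contains_Klt l t V E"
    using assms(1) by (simp add: inv_into_image_cancel)
qed (rule contains_Klt_image[OF _ assms(1)])

text \<open>An edge \<open>ab\<^sub>0\<close> of the second graph would put \<open>b\<^sub>0\<close> into both vertex sets, so
  all of \<open>A \<union> B\<close> lies in \<open>P1\<close>; an edge of the second graph inside \<open>P1\<close> would then have
  both ends equal to \<open>c\<close>.\<close>

lemma complete_bipartite_in_one_part:
  assumes complete: "\<forall>a\<in>A. \<forall>b\<in>B. {a, b} \<in> E1 \<union> E2" and "A \<inter> B = {}"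
    and E1: "\<forall>e\<in>E1. e \<subseteq> P1" and E2: "\<forall>e\<in>E2. e \<subseteq> P2" and common: "P1 \<inter> P2 \<subseteq> {c}"
    and "a0 \<in> A" "b0 \<in> B" "a0 \<noteq> c" "b0 \<noteq> c" "{a0, b0} \<in> E1"
  shows "\<forall>a\<in>A. \<forall>b\<in>B. {a, b} \<in> E1"
proof -
  have "a0 \<in> P1" "b0 \<in> P1"
    using E1 \<open>{a0, b0} \<in> E1\<close> by auto
  have in_P1: "x \<in> P1" if "{x, y} \<in> E1 \<union> E2" "y \<in> P1" "y \<noteq> c" for x y
  proof (cases "{x, y} \<in> E1")
    case False
    then have "y \<in> P2"
      using that(1) E2 by blast
    with that(2,3) common show ?thesis by auto
  qed (use E1 in blast)
  have A_P1: "a \<in> P1" if "a \<in> A" for a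
    using in_P1[of a b0] complete that \<open>b0 \<in> B\<close> \<open>b0 \<in> P1\<close> \<open>b0 \<noteq> c\<close> by simp
  have B_P1: "b \<in> P1" if "b \<in> B" for b
    using in_P1[of b a0] complete that \<open>a0 \<in> A\<close> \<open>a0 \<in> P1\<close> \<open>a0 \<noteq> c\<close>
    by (simp add: insert_commute)
  show ?thesis
  proof (intro ballI)
    fix a b
    assume "a \<in> A" "b \<in> B"
    then have "{a, b} \<in> E1 \<union> E2" "a \<noteq> b" "a \<in> P1" "b \<in> P1"
      using complete \<open>A \<inter> B = {}\<close> A_P1 B_P1 by auto
    moreover have "\<not> {a, b} \<subseteq> P2"
      using calculation(2-4) common by auto
    ultimately show "{a, b} \<in> E1"
      using E2 by blast
  qed
qed

lemma contains_Klt_Un_one_common_vertex: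
  assumes "contains_Klt l t V (E1 \<union> E2)" "2 \<le> l" "2 \<le> t"
    and "\<forall>e\<in>E1. e \<subseteq> P1" "\<forall>e\<in>E2. e \<subseteq> P2" "P1 \<inter> P2 \<subseteq> {c}"
  shows "contains_Klt l t P1 E1 \<or> contains_Klt l t P2 E2"
proof -
  from assms(1) obtain A B where AB: "A \<subseteq> V" "B \<subseteq> V" "A \<inter> B = {}" "card A = l" "card B = t"
    "finite A" "finite B" and complete: "\<forall>a\<in>A. \<forall>b\<in>B. {a, b} \<in> E1 \<union> E2"
    unfolding contains_Klt_def by blast
  have "\<exists>x\<in>S. x \<noteq> c" if "2 \<le> card S" for S :: "'a set"
  proof (rule ccontr)
    assume "\<not> (\<exists>x\<in>S. x \<noteq> c)"
    then have "card S \<le> card {c}"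
      by (intro card_mono) auto
    with that show False by simp
  qed
  then obtain a0 b0 where "a0 \<in> A" "b0 \<in> B" "a0 \<noteq> c" "b0 \<noteq> c"
    using AB(4,5) assms(2,3) by meson
  moreover have "{a0, b0} \<in> E1 \<or> {a0, b0} \<in> E2"
    using complete calculation by blast
  moreover have complete': "\<forall>a\<in>A. \<forall>b\<in>B. {a, b} \<in> E2 \<union> E1" and "P2 \<inter> P1 \<subseteq> {c}"
    using complete assms(6) by blast+
  ultimately have "(\<forall>a\<in>A. \<forall>b\<in>B. {a, b} \<in> E1) \<or> (\<forall>a\<in>A. \<forall>b\<in>B. {a, b} \<in> E2)"
    using complete_bipartite_in_one_part[OF complete AB(3) assms(4-6)]
      complete_bipartite_in_one_part[OF complete' AB(3) assms(5,4)]
    by blast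
  moreover have "A \<subseteq> P1 \<and> B \<subseteq> P1" if "\<forall>a\<in>A. \<forall>b\<in>B. {a, b} \<in> E1"
    using that assms(4) \<open>a0 \<in> A\<close> \<open>b0 \<in> B\<close> by blast
  moreover have "A \<subseteq> P2 \<and> B \<subseteq> P2" if "\<forall>a\<in>A. \<forall>b\<in>B. {a, b} \<in> E2"
    using that assms(5) \<open>a0 \<in> A\<close> \<open>b0 \<in> B\<close> by blast
  ultimately show ?thesis
    unfolding contains_Klt_def using AB by blast
qed

lemma no_Klt_in_empty_graph:
  assumes "0 < l" "0 < t"
  shows "\<not> contains_Klt l t V {}"
  using assms unfolding contains_Klt_def by fastforce

lemma finite_Klt_free_edge_counts:
  fixes m :: nat
  shows "finite {card E | E. simple_graph {0..<m} E \<and> \<not> contains_Klt l t {0..<m} E}"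
proof -
  have "finite {E. simple_graph {0..<m} E}"
    by (rule finite_simple_graphs) simp
  then have "finite {E. simple_graph {0..<m} E \<and> \<not> contains_Klt l t {0..<m} E}"
    by (rule rev_finite_subset) blast
  then show ?thesis
    by (rule finite_image_set)
qed

lemma card_le_ex_Klt:
  assumes "simple_graph {0..<m} E" "\<not> contains_Klt l t {0..<m} E"
  shows "card E \<le> ex_Klt m l t"
  unfolding ex_Klt_def using finite_Klt_free_edge_counts assms by (intro Max_ge) auto

lemma ex_Klt_attained:
  assumes "0 < l" "0 < t"
  obtains E where "simple_graph {0..<m} E" "\<not> contains_Klt l t {0..<m} E" "card E = ex_Klt m l t"
proof -
  have "simple_graph {0..<m} {}"
    by (simp add: simple_graph_def)
  then have "{card E | E. simple_graph {0..<m} E \<and> \<not> contains_Klt l t {0..<m} E} \<noteq> {}"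
    using no_Klt_in_empty_graph[OF assms] by blast
  then have "ex_Klt m l t \<in> {card E | E. simple_graph {0..<m} E \<and> \<not> contains_Klt l t {0..<m} E}"
    unfolding ex_Klt_def by (rule Max_in[OF finite_Klt_free_edge_counts])
  then obtain E where "simple_graph {0..<m} E" "\<not> contains_Klt l t {0..<m} E" "card E = ex_Klt m l t"
    by auto
  then show ?thesis
    by (rule that)
qed

text \<open>The second graph is shifted to \<open>{a - 1..<a + b - 1}\<close>, so that it meets the first one,
  living on \<open>{0..<a}\<close>, exactly in the vertex \<open>a - 1\<close>.\<close>

lemma ex_Klt_add_le:
  assumes "2 \<le> l" "2 \<le> t" "1 \<le> a" "1 \<le> b"
  shows "ex_Klt a l t + ex_Klt b l t \<le> ex_Klt (a + b - 1) l t"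
proof -
  obtain E1 where E1: "simple_graph {0..<a} E1" "\<not> contains_Klt l t {0..<a} E1"
    "card E1 = ex_Klt a l t"
    by (rule ex_Klt_attained[of l t]) (use assms in auto)
  obtain E2 where E2: "simple_graph {0..<b} E2" "\<not> contains_Klt l t {0..<b} E2"
    "card E2 = ex_Klt b l t"
    by (rule ex_Klt_attained[of l t]) (use assms in auto)
  define shift where "shift = (\<lambda>x::nat. x + (a - 1))"
  define E2' where "E2' = (`) shift ` E2"
  have inj_shift: "inj_on shift X" for X
    unfolding shift_def by (simp add: inj_on_def)
  have shift_range: "shift ` {0..<b} = {a - 1..<a + b - 1}"
    unfolding shift_def image_add_atLeastLessThan' using assms(3) by (simp add: add.commute)
  have "\<forall>e\<in>E2. e \<subseteq> {0..<b}"
    using E2(1) unfolding simple_graph_def by blast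
  then have "\<not> contains_Klt l t (shift ` {0..<b}) E2'"
    unfolding E2'_def using contains_Klt_image_iff[OF inj_shift] E2(2) by blast
  moreover have "simple_graph (shift ` {0..<b}) E2'"
    unfolding E2'_def by (rule simple_graph_image[OF E2(1) inj_shift])
  ultimately have E2': "simple_graph {a - 1..<a + b - 1} E2'"
    "\<not> contains_Klt l t {a - 1..<a + b - 1} E2'"
    unfolding shift_range by simp_all
  have "{0..<a + b - 1} = {0..<a} \<union> {a - 1..<a + b - 1}"
    using assms(3,4) by auto
  then have simple: "simple_graph {0..<a + b - 1} (E1 \<union> E2')"
    using simple_graph_Un[OF E1(1) E2'(1)] by simp
  have common: "{0..<a} \<inter> {a - 1..<a + b - 1} \<subseteq> {a - 1}"
    by auto
  have E1_sub: "\<forall>e\<in>E1. e \<subseteq> {0..<a}" and E2'_sub: "\<forall>e\<in>E2'. e \<subseteq> {a - 1..<a + b - 1}"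
    using E1(1) E2'(1) unfolding simple_graph_def by auto
  have free: "\<not> contains_Klt l t {0..<a + b - 1} (E1 \<union> E2')"
    using contains_Klt_Un_one_common_vertex[OF _ assms(1,2) E1_sub E2'_sub common] E1(2) E2'(2)
    by blast
  have "E1 \<inter> E2' = {}"
  proof (rule equals0I)
    fix e
    assume e: "e \<in> E1 \<inter> E2'"
    then have "e \<subseteq> {a - 1}"
      using E1_sub E2'_sub common by blast
    then have "card e \<le> 1"
      using card_mono[of "{a - 1}" e] by simp
    moreover have "card e = 2"
      using e E1(1) unfolding simple_graph_def by blast
    ultimately show False
      by simp
  qed
  then have "card (E1 \<union> E2') = card E1 + card E2'"
    using simple_graph_finite_edges[OF E1(1)] simple_graph_finite_edges[OF E2'(1)]
    by (simp add: card_Un_disjoint)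
  also have "card E2' = card E2"
    unfolding E2'_def by (simp add: card_image inj_on_image inj_shift)
  finally show ?thesis
    using card_le_ex_Klt[OF simple free] E1(3) E2(3) by simp
qed

lemma sum_ex_Klt_le:
  assumes "2 \<le> l" "2 \<le> t" "\<And>i. i \<in> {1..s} \<Longrightarrow> 1 \<le> m i"
  shows "(\<Sum>i=1..s. ex_Klt (m i) l t) \<le> ex_Klt ((\<Sum>i=1..s. m i) - s + 1) l t"
  using assms(3)
proof (induction s)
  case (Suc n)
  have "n \<le> (\<Sum>i=1..n. m i)" and m_Suc: "1 \<le> m (Suc n)"
    using sum_mono[of "{1..n}" "\<lambda>_. 1" m] Suc.prems by auto
  then have sum_Suc: "(\<Sum>i=1..Suc n. m i) - Suc n + 1 = ((\<Sum>i=1..n. m i) - n + 1) + m (Suc n) - 1"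
    by simp
  have "(\<Sum>i=1..Suc n. ex_Klt (m i) l t) = (\<Sum>i=1..n. ex_Klt (m i) l t) + ex_Klt (m (Suc n)) l t"
    by simp
  also have "\<dots> \<le> ex_Klt ((\<Sum>i=1..n. m i) - n + 1) l t + ex_Klt (m (Suc n)) l t"
    using Suc by simp
  also have "\<dots> \<le> ex_Klt ((\<Sum>i=1..Suc n. m i) - Suc n + 1) l t"
    unfolding sum_Suc by (rule ex_Klt_add_le) (use assms m_Suc in auto)
  finally show ?case .
qed simp

theorem lemma2p6:
  fixes l t s :: nat and m :: "nat \<Rightarrow> nat"
  assumes "2 \<le> l" and "l \<le> t" and "2 \<le> s"
    and "\<And>i. i \<in> {1..s} \<Longrightarrow> 1 \<le> m i"
  shows "(\<Sum>i=1..s. ex_Klt (m i) l t) \<le> ex_Klt ((\<Sum>i=1..s. m i) - s + 1) l t"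
  using sum_ex_Klt_le[of l t s m] assms by simp

end
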